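(* Let $p\ge 5$ be a prime and let $n$, $m$ and $s$ be nonnegative integers such that $n\ge m$ and $s\ge 1$. Let $r=\sum_{j=0}^{s-1}a_jp^j$ with integers $a_j$ such that $1\le a_0\le p-1$ and $0\le a_j\le p-1$ for all $j=1,\ldots,s-1$. Then \[ \binom{np^s}{mp^s+r}\equiv (m+1)\binom{n}{m+1}\binom{p^s}{r}\pmod{p^{s+1}}. \]
   Context: Binomial coefficients follow the convention $\binom{l}{t}=0$ if $l<t$ and $\binom{0}{0}=1$. *)

theory Defs
  imports "HOL-Number_Theory.Number_Theory"
begin

end

theory Submission
  imports Defs
begin

text \<open>
  Write \<open>P = p^s\<close> and \<open>K = m P + r\<close>. Vandermonde's identity
  \<open>C((n+1)P, K) = \<Sum>\<^sub>k C(P, k) C(nP, K - k)\<close> sets up an induction on \<open>n\<close>, once one knows that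
  modulo \<open>p^(s+1)\<close> only the terms \<open>k = 0, r, P\<close> survive. For any other \<open>0 < k < P\<close> both
  \<open>k C(P, k)\<close> and \<open>(K - k) C(nP, K - k)\<close> are divisible by \<open>P\<close>, whereas \<open>P\<close> does not divide
  \<open>k (K - k)\<close> because \<open>K \<equiv> r (mod P)\<close> and \<open>p\<close> does not divide \<open>r\<close>; comparing \<open>p\<close>-adic valuations, \<open>p^(s+1)\<close>
  divides \<open>C(P, k) C(nP, K - k)\<close>. The term \<open>k = r\<close> is \<open>C(P, r) C(nP, mP)\<close>, where
  \<open>p^s\<close> divides \<open>C(P, r)\<close> and \<open>C(nP, mP) \<equiv> C(n, m) (mod p)\<close> by the same Vandermonde argument
  modulo \<open>p\<close>. The terms \<open>k = 0\<close> and \<open>k = P\<close> are covered by the induction hypothesis, and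
  Pascal's rule assembles the three contributions.
\<close>

lemma dvd_mult_choose_mult: "0 < k \<Longrightarrow> N dvd k * ((M * N) choose k)"
  by (simp add: times_binomial_minus1_eq)

lemma choose_Suc_mult_eq_sum:
  "(Suc n * N) choose K = (\<Sum>k\<le>K. (N choose k) * ((n * N) choose (K - k)))"
  using vandermonde[of N "n * N" K] by (simp add: add.commute)

lemma cong_sum_subset:
  fixes f :: "'a \<Rightarrow> nat"
  assumes "finite A" "B \<subseteq> A" "\<And>x. x \<in> A - B \<Longrightarrow> q dvd f x"
  shows "[sum f A = sum f B] (mod q)"
proof -
  have "sum f A = sum f B + sum f (A - B)"
    using assms(1,2) by (simp add: sum.subset_diff)
  moreover have "q dvd sum f (A - B)"
    using assms(3) by (rule dvd_sum)
  ultimately show ?thesis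
    by (simp add: cong_add_lcancel_0_nat cong_0_iff)
qed

lemma prime_dvd_choose_prime_power:
  assumes "prime p" "0 < k" "k < p ^ s"
  shows "p dvd (p ^ s choose k)"
proof (rule ccontr)
  assume "\<not> p dvd (p ^ s choose k)"
  then have "coprime (p ^ s) (p ^ s choose k)"
    using assms(1) by (simp add: prime_imp_coprime coprime_commute)
  moreover have "p ^ s dvd k * (p ^ s choose k)"
    using dvd_mult_choose_mult[OF assms(2), of "p ^ s" 1] by simp
  ultimately have "p ^ s dvd k"
    using coprime_dvd_mult_left_iff by blast
  then show False
    using assms by (simp add: nat_dvd_not_less)
qed

lemma prime_power_dvd_choose_prime_power:
  assumes "prime p" "\<not> p dvd k"
  shows "p ^ s dvd (p ^ s choose k)"
proof -
  have "coprime (p ^ s) k"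
    using assms by (simp add: prime_imp_coprime)
  moreover have "p ^ s dvd k * (p ^ s choose k)"
    using dvd_mult_choose_mult[of k "p ^ s" 1] assms(2) by (metis dvd_0_right gr0I mult_1)
  ultimately show ?thesis
    using coprime_dvd_mult_right_iff by blast
qed

lemma prime_power_dvd_mult_cofactor:
  fixes X Y :: nat
  assumes "prime p" "Y \<noteq> 0" "p ^ (a + b) dvd X * Y" "\<not> p ^ b dvd X"
  shows "p ^ (a + 1) dvd Y"
proof -
  have "X \<noteq> 0"
    using assms(4) by (metis dvd_0_right)
  have "\<not> is_unit p"
    using prime_gt_1_nat[OF assms(1)] by simp
  then have "a + b \<le> multiplicity p X + multiplicity p Y" "multiplicity p X < b"
    using assms \<open>X \<noteq> 0\<close>
    by (simp_all add: power_dvd_iff_le_multiplicity prime_elem_multiplicity_mult_distrib)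
  then show ?thesis
    by (intro multiplicity_dvd') simp
qed

lemma prime_power_not_dvd_mult_complement:
  fixes p r k m s :: nat
  assumes p: "prime p" and r: "\<not> p dvd r" "r < p ^ s"
    and k: "0 < k" "k < p ^ s" "k \<noteq> r" "k \<le> m * p ^ s + r"
  shows "\<not> p ^ s dvd k * (m * p ^ s + r - k)"
proof
  define K where "K = m * p ^ s + r"
  assume dvd: "p ^ s dvd k * (K - k)"
  show False
  proof (cases "p dvd k")
    case True
    have "s \<noteq> 0"
      using k(1,2) by (cases s) simp_all
    then have "p dvd m * p ^ s"
      by simp
    then have "\<not> p dvd K"
      using r(1) unfolding K_def by (simp add: dvd_add_right_iff)
    then have "\<not> p dvd K - k"
      using True k(4) unfolding K_def by (metis dvd_add le_add_diff_inverse2)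
    then have "p ^ s dvd k"
      using dvd p by (simp add: prime_imp_coprime coprime_dvd_mult_left_iff)
    then show False
      using k(1,2) by (simp add: nat_dvd_not_less)
  next
    case False
    then have "p ^ s dvd K - k"
      using dvd p by (simp add: prime_imp_coprime coprime_dvd_mult_right_iff)
    then have "K mod p ^ s = k mod p ^ s"
      using mod_eq_dvd_iff_nat[of k K "p ^ s"] k(4) unfolding K_def by blast
    then show False
      using r(2) k(2,3) unfolding K_def by simp
  qed
qed

lemma prime_power_Suc_dvd_choose_mult_choose:
  assumes p: "prime p" and r: "\<not> p dvd r" "r < p ^ s"
    and k: "k \<notin> {0, r, p ^ s}" "k \<le> m * p ^ s + r"
  shows "p ^ (s + 1) dvd (p ^ s choose k) * ((n * p ^ s) choose (m * p ^ s + r - k))"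
proof (cases "k < p ^ s")
  case True
  define K where "K = m * p ^ s + r"
  have "0 < K - k"
    using True k r(2) unfolding K_def by (cases m) auto
  show ?thesis
  proof (cases "(n * p ^ s) choose (K - k) = 0")
    case False
    have "p ^ s * p ^ s dvd (k * (p ^ s choose k)) * ((K - k) * ((n * p ^ s) choose (K - k)))"
      using dvd_mult_choose_mult[of k "p ^ s" 1] k(1)
        dvd_mult_choose_mult[OF \<open>0 < K - k\<close>, of "p ^ s" n]
      by (intro mult_dvd_mono) simp_all
    then have "p ^ (s + s) dvd (k * (K - k)) * ((p ^ s choose k) * ((n * p ^ s) choose (K - k)))"
      by (simp only: power_add mult_ac)
    moreover have "\<not> p ^ s dvd k * (K - k)"
      using prime_power_not_dvd_mult_complement[OF p r, of k m] True k unfolding K_def by simp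
    ultimately show ?thesis
      using prime_power_dvd_mult_cofactor[OF p] False True unfolding K_def by simp
  qed (simp only: K_def mult_0_right dvd_0_right)
qed (use k in \<open>simp add: binomial_eq_0\<close>)

lemma choose_mult_prime_power_cong:
  assumes p: "prime p"
  shows "[(a * p ^ s) choose (b * p ^ s) = a choose b] (mod p)"
proof (induction a arbitrary: b)
  case 0
  have "p ^ s > 0"
    using p prime_gt_0_nat by simp
  then show ?case
    by (cases b) (auto simp: binomial_eq_0)
next
  case (Suc a)
  show ?case
  proof (cases b)
    case (Suc b')
    define P where "P = p ^ s"
    have "0 < P"
      using p prime_gt_0_nat unfolding P_def by simp
    define f where "f k = (P choose k) * ((a * P) choose (b * P - k))" for k
    have "(Suc a * P) choose (b * P) = sum f {..b * P}"
      unfolding f_def by (rule choose_Suc_mult_eq_sum)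
    also have "[\<dots> = sum f {0, P}] (mod p)"
    proof (rule cong_sum_subset)
      show "{0, P} \<subseteq> {..b * P}"
        using Suc by simp
      show "p dvd f k" if "k \<in> {..b * P} - {0, P}" for k
        using that prime_dvd_choose_prime_power[OF p, of k s] unfolding f_def P_def
        by (cases "k < p ^ s") (simp_all add: binomial_eq_0)
    qed simp
    also have "sum f {0, P} = ((a * P) choose (b * P)) + ((a * P) choose (b' * P))"
      using \<open>0 < P\<close> Suc unfolding f_def by simp
    also have "[\<dots> = (a choose b) + (a choose b')] (mod p)"
      using Suc.IH unfolding P_def by (intro cong_add)
    finally show ?thesis
      using Suc unfolding P_def by (simp add: add.commute)
  qed simp
qed

lemma choose_mult_prime_power_add_cong:
  assumes p: "prime p" and r: "\<not> p dvd r" "r < p ^ s"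
  shows "[(n * p ^ s) choose (m * p ^ s + r)
          = (m + 1) * (n choose (m + 1)) * (p ^ s choose r)] (mod p ^ (s + 1))"
proof (induction n arbitrary: m)
  case 0
  have "r \<noteq> 0"
    using r(1) by (metis dvd_0_right)
  then show ?case
    by (simp add: binomial_eq_0)
next
  case (Suc n)
  define P where "P = p ^ s"
  define K where "K = m * P + r"
  define c where "c = P choose r"
  define f where "f k = (P choose k) * ((n * P) choose (K - k))" for k
  have "r \<noteq> 0"
    using r(1) by (metis dvd_0_right)
  then have "0 < r" "r < P"
    using r(2) unfolding P_def by simp_all
  have vanish: "p ^ (s + 1) dvd f k" if "k \<in> {..K} - {0, r, P}" for k
    using that prime_power_Suc_dvd_choose_mult_choose[OF p r, of k m n]
    unfolding f_def K_def P_def by simp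
  have f0: "[f 0 = (m + 1) * (n choose (m + 1)) * c] (mod p ^ (s + 1))"
    using Suc.IH[of m] unfolding f_def K_def c_def P_def by simp
  have "[c * ((n * P) choose (m * P)) = c * (n choose m)] (mod c * p)"
    using choose_mult_prime_power_cong[OF p] unfolding P_def by (rule cong_cmult_leftI)
  moreover have "p ^ (s + 1) dvd c * p"
    using prime_power_dvd_choose_prime_power[OF p r(1)] unfolding c_def P_def by simp
  ultimately have fr: "[f r = c * (n choose m)] (mod p ^ (s + 1))"
    unfolding f_def K_def c_def by (simp add: cong_dvd_modulus_nat)
  have "(Suc n * P) choose K = sum f {..K}"
    unfolding f_def by (rule choose_Suc_mult_eq_sum)
  also have "[\<dots> = (m + 1) * (Suc n choose (m + 1)) * c] (mod p ^ (s + 1))"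
  proof (cases m)
    case 0
    have "[sum f {..K} = sum f {0, r}] (mod p ^ (s + 1))"
      using vanish \<open>r < P\<close> unfolding K_def 0 by (intro cong_sum_subset) auto
    also have "sum f {0, r} = f 0 + f r"
      using \<open>0 < r\<close> by simp
    also have "[\<dots> = (m + 1) * (n choose (m + 1)) * c + c * (n choose m)] (mod p ^ (s + 1))"
      using f0 fr by (rule cong_add)
    finally show ?thesis
      unfolding 0 by (simp add: algebra_simps)
  next
    case (Suc m')
    have "[sum f {..K} = sum f {0, r, P}] (mod p ^ (s + 1))"
      using vanish \<open>r < P\<close> unfolding K_def Suc by (intro cong_sum_subset) auto
    also have "sum f {0, r, P} = f 0 + f r + f P"
      using \<open>0 < r\<close> \<open>r < P\<close> by simp
    also have "[\<dots> = (m + 1) * (n choose (m + 1)) * c + c * (n choose m) + m * (n choose m) * c]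
        (mod p ^ (s + 1))"
    proof (intro cong_add f0 fr)
      have "K - P = m' * P + r"
        unfolding K_def Suc by simp
      then show "[f P = m * (n choose m) * c] (mod p ^ (s + 1))"
        using Suc.IH[of m'] unfolding f_def c_def P_def Suc by simp
    qed
    finally show ?thesis
      by (simp add: algebra_simps)
  qed
  finally show ?case
    unfolding K_def c_def P_def .
qed

lemma digit_expansion_bounds:
  fixes p s r :: nat and a :: "nat \<Rightarrow> int"
  assumes "s \<ge> 1" "1 \<le> a 0" "a 0 \<le> int p - 1"
    and "\<forall>j\<in>{1..s-1}. 0 \<le> a j \<and> a j \<le> int p - 1"
    and "int r = (\<Sum>j<s. a j * int p ^ j)"
  shows "r < p ^ s" "\<not> p dvd r"
proof -
  have digit: "0 \<le> a j \<and> a j \<le> int p - 1" if "j < s" for j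
    using assms(2-4) that by (cases "j = 0") auto
  have "int r \<le> (\<Sum>j<s. (int p - 1) * int p ^ j)"
    unfolding assms(5) using digit by (intro sum_mono mult_right_mono) auto
  also have "\<dots> = int p ^ s - 1"
    by (induction s) (simp_all add: algebra_simps)
  finally show "r < p ^ s"
    by (simp flip: of_nat_power)
  have "{..<s} = insert 0 {1..<s}"
    using assms(1) by auto
  then have "int r = a 0 + (\<Sum>j\<in>{1..<s}. a j * int p ^ j)"
    using assms(5) by simp
  moreover have "int p dvd (\<Sum>j\<in>{1..<s}. a j * int p ^ j)"
    by (intro dvd_sum) (auto intro: dvd_mult dvd_power)
  moreover have "\<not> int p dvd a 0"
    using assms(2,3) zdvd_imp_le by fastforce
  ultimately show "\<not> p dvd r"
    by (metis dvd_add_left_iff int_dvd_int_iff)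
qed

theorem corollary1p2:
  fixes p n m s r :: nat and a :: "nat \<Rightarrow> int"
  assumes "prime p" and "p \<ge> 5"
    and "n \<ge> m" and "s \<ge> 1"
    and "1 \<le> a 0" and "a 0 \<le> int p - 1"
    and "\<forall>j\<in>{1..s-1}. 0 \<le> a j \<and> a j \<le> int p - 1"
    and "int r = (\<Sum>j<s. a j * int p ^ j)"
  shows "[int ((n * p ^ s) choose (m * p ^ s + r))
          = int (m + 1) * int (n choose (m + 1)) * int ((p ^ s) choose r)] (mod (int p ^ (s + 1)))"
proof -
  have "r < p ^ s" "\<not> p dvd r"
    using digit_expansion_bounds[OF assms(4-8)] by simp_all
  then have "[(n * p ^ s) choose (m * p ^ s + r)
      = (m + 1) * (n choose (m + 1)) * (p ^ s choose r)] (mod p ^ (s + 1))"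
    using choose_mult_prime_power_add_cong[OF assms(1)] by simp
  then have "[int ((n * p ^ s) choose (m * p ^ s + r))
      = int ((m + 1) * (n choose (m + 1)) * (p ^ s choose r))] (mod int (p ^ (s + 1)))"
    by (simp only: cong_int_iff)
  then show ?thesis
    by (simp only: of_nat_mult of_nat_power)
qed

end
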